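(* In the Part I procedure, let $xy$ be an edge processed in a bridge step of phase $\Delta$, so $\mathrm{lcp}(x)+\mathrm{lcp}(y)=2\Delta-2$, and let $v$ be a vertex that becomes even in this bridge step. Then $\mathrm{lcp}(v)\ge\Delta$.
   Context: Let $G=(V,E)$ be a finite undirected graph and $M$ a matching in $G$; free vertices and $\mathit{mate}(v)$ are as usual. The Part I procedure maintains a search structure $S$: a forest whose nodes are either single (odd) vertices or blossoms (disjoint vertex sets with a distinguished base vertex), each tree rooted at a blossom containing a free vertex. Vertices in $S$ are labelled even (those in blossoms) or odd; vertices not in $S$ are unlabelled. A vertex is born even/odd according to the label it receives when inserted. The procedure maintains $\mathrm{lcp}(v)$ for even vertices and $\mathrm{lcp}_{\mathrm{odd}}(v)$ for vertices born odd. The blossom nodes currently in $S$ are the maximal blossoms. Phase $0$: every free vertex $v$ becomes the root of its own tree as a trivial blossom $\{v\}$ with base $v$, even, $\mathrm{lcp}(v)=0$. For $\Delta=1,2,\dots$, phase $\Delta$ does: (i) if $\Delta$ is even, growth steps: while some even vertex $v$ with $\mathrm{lcp}(v)=\Delta-2$ has a neighbour $x$ not in $S$, add $x$ as an odd child of the blossom containing $v$ with $\mathrm{lcp}_{\mathrm{odd}}(x)=\Delta-1$, and $\mathit{mate}(x)$ as a child of $x$, as a trivial even blossom with $\mathrm{lcp}(\mathit{mate}(x))=\Delta$; (ii) bridge steps: while there is a non-matching edge $xy$ with $x,y$ even, in different maximal blossoms $B_x,B_y$, and $\mathrm{lcp}(x)+\mathrm{lcp}(y)=2\Delta-2$: if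 $B_x,B_y$ lie in different trees the procedure stops; otherwise let $B$ be the lowest common ancestor of $B_x,B_y$; every odd vertex $z$ on the tree paths from $B_x$ and $B_y$ to $B$ becomes even with $\mathrm{lcp}(z)=\mathrm{lcp}(x)+1+\mathrm{lcp}(y)-\mathrm{lcp}_{\mathrm{odd}}(z)$, and $B$ together with all blossoms and odd vertices on both paths is merged into one new blossom with base equal to the base of $B$, replacing $B$ in the tree. *)

theory Defs
  imports Main
begin

definition graph_matching :: "'v set \<Rightarrow> 'v set set \<Rightarrow> 'v set set \<Rightarrow> bool" where
  "graph_matching V E M \<longleftrightarrow>
     finite V \<and> (\<forall>e\<in>E. \<exists>u w. e = {u, w} \<and> u \<noteq> w \<and> u \<in> V \<and> w \<in> V) \<and>
     M \<subseteq> E \<and> (\<forall>e\<in>M. \<forall>f\<in>M. e \<noteq> f \<longrightarrow> e \<inter> f = {})"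

definition free_vertex :: "'v set \<Rightarrow> 'v set set \<Rightarrow> 'v \<Rightarrow> bool" where
  "free_vertex V M v \<longleftrightarrow> v \<in> V \<and> (\<forall>e\<in>M. v \<notin> e)"

definition mate :: "'v set set \<Rightarrow> 'v \<Rightarrow> 'v" where
  "mate M v = (THE u. {v, u} \<in> M)"

text \<open>Nodes of the search forest: single odd vertices, or blossoms (vertex set, base).\<close>
datatype 'v node = OddN 'v | BlosN "'v set" 'v

fun nverts :: "'v node \<Rightarrow> 'v set" where
  "nverts (OddN z) = {z}"
| "nverts (BlosN S b) = S"

fun is_blossom :: "'v node \<Rightarrow> bool" where
  "is_blossom (OddN z) = False"
| "is_blossom (BlosN S b) = True"

fun nbase :: "'v node \<Rightarrow> 'v" where
  "nbase (OddN z) = z"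
| "nbase (BlosN S b) = b"

record 'v sstate =
  nodes :: "'v node set"            \<comment> \<open>current nodes of S (blossoms are the maximal ones)\<close>
  par   :: "'v node \<Rightarrow> 'v node option"
  lcp   :: "'v \<Rightarrow> int"
  lcpo  :: "'v \<Rightarrow> int"              \<comment> \<open>lcp_odd(v) for vertices born odd\<close>

definition even_verts :: "'v sstate \<Rightarrow> 'v set" where
  "even_verts s = \<Union>{nverts n | n. n \<in> nodes s \<and> is_blossom n}"

definition odd_verts :: "'v sstate \<Rightarrow> 'v set" where
  "odd_verts s = {z. OddN z \<in> nodes s}"

definition in_S :: "'v sstate \<Rightarrow> 'v set" where
  "in_S s = even_verts s \<union> odd_verts s"

definition prel :: "'v sstate \<Rightarrow> ('v node \<times> 'v node) set" where
  "prel s = {(n, p). n \<in> nodes s \<and> par s n = Some p}"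

definition anc :: "'v sstate \<Rightarrow> 'v node \<Rightarrow> 'v node \<Rightarrow> bool" where
  "anc s n m \<longleftrightarrow> (n, m) \<in> (prel s)\<^sup>*"

definition is_lca :: "'v sstate \<Rightarrow> 'v node \<Rightarrow> 'v node \<Rightarrow> 'v node \<Rightarrow> bool" where
  "is_lca s A C B \<longleftrightarrow> anc s A B \<and> anc s C B \<and> (\<forall>D. anc s A D \<and> anc s C D \<longrightarrow> anc s B D)"

definition path_nodes :: "'v sstate \<Rightarrow> 'v node \<Rightarrow> 'v node \<Rightarrow> 'v node set" where
  "path_nodes s A B = {n. anc s A n \<and> anc s n B}"

definition init_state :: "'v set \<Rightarrow> 'v set set \<Rightarrow> 'v sstate" where
  "init_state V M = \<lparr> nodes = {BlosN {v} v | v. free_vertex V M v},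
                      par = (\<lambda>_. None), lcp = (\<lambda>_. 0), lcpo = (\<lambda>_. 0) \<rparr>"

definition growth_step :: "'v set set \<Rightarrow> 'v set set \<Rightarrow> nat \<Rightarrow> 'v sstate \<Rightarrow> 'v \<Rightarrow> 'v \<Rightarrow> 'v sstate \<Rightarrow> bool" where
  "growth_step E M \<Delta> s v x s' \<longleftrightarrow>
     v \<in> even_verts s \<and> lcp s v = int \<Delta> - 2 \<and> {v, x} \<in> E \<and> x \<notin> in_S s \<and>
     (\<exists>Bv. Bv \<in> nodes s \<and> is_blossom Bv \<and> v \<in> nverts Bv \<and>
       (let m = mate M x in
        s' = \<lparr> nodes = nodes s \<union> {OddN x, BlosN {m} m},
               par = (par s)(OddN x := Some Bv, BlosN {m} m := Some (OddN x)),
               lcp = (lcp s)(m := int \<Delta>),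
               lcpo = (lcpo s)(x := int \<Delta> - 1) \<rparr>))"

definition bridge_edge :: "'v set set \<Rightarrow> 'v set set \<Rightarrow> nat \<Rightarrow> 'v sstate \<Rightarrow> 'v \<Rightarrow> 'v \<Rightarrow> 'v node \<Rightarrow> 'v node \<Rightarrow> bool" where
  "bridge_edge E M \<Delta> s x y Bx By \<longleftrightarrow>
     {x, y} \<in> E \<and> {x, y} \<notin> M \<and>
     Bx \<in> nodes s \<and> By \<in> nodes s \<and> is_blossom Bx \<and> is_blossom By \<and> Bx \<noteq> By \<and>
     x \<in> nverts Bx \<and> y \<in> nverts By \<and>
     lcp s x + lcp s y = 2 * int \<Delta> - 2"

text \<open>Bridge step inside one tree: blossom formation (the different-tree case stops the procedure).\<close>
definition bridge_step :: "'v set set \<Rightarrow> 'v set set \<Rightarrow> nat \<Rightarrow> 'v sstate \<Rightarrow> 'v \<Rightarrow> 'v \<Rightarrow> 'v sstate \<Rightarrow> bool" where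
  "bridge_step E M \<Delta> s x y s' \<longleftrightarrow>
     (\<exists>Bx By B. bridge_edge E M \<Delta> s x y Bx By \<and> is_lca s Bx By B \<and>
       (let P = path_nodes s Bx B \<union> path_nodes s By B;
            Z = {z. OddN z \<in> P};
            NB = BlosN (\<Union>(nverts ` P)) (nbase B) in
        s' = \<lparr> nodes = (nodes s - P) \<union> {NB},
               par = (\<lambda>n. if n = NB then par s B
                          else (case par s n of None \<Rightarrow> None
                                | Some p \<Rightarrow> if p \<in> P then Some NB else Some p)),
               lcp = (\<lambda>z. if z \<in> Z then lcp s x + 1 + lcp s y - lcpo s z else lcp s z),
               lcpo = lcpo s \<rparr>))"

datatype stage = Grow | Brid

inductive reach :: "'v set \<Rightarrow> 'v set set \<Rightarrow> 'v set set \<Rightarrow> nat \<Rightarrow> stage \<Rightarrow> 'v sstate \<Rightarrow> bool"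
  for V E M where
  init: "reach V E M 1 Grow (init_state V M)"
| grow: "reach V E M \<Delta> Grow s \<Longrightarrow> even \<Delta> \<Longrightarrow> growth_step E M \<Delta> s v x s' \<Longrightarrow> reach V E M \<Delta> Grow s'"
| to_bridge: "reach V E M \<Delta> Grow s \<Longrightarrow> (odd \<Delta> \<or> \<not> (\<exists>v x s'. growth_step E M \<Delta> s v x s'))
              \<Longrightarrow> reach V E M \<Delta> Brid s"
| bridge: "reach V E M \<Delta> Brid s \<Longrightarrow> bridge_step E M \<Delta> s x y s' \<Longrightarrow> reach V E M \<Delta> Brid s'"
| next_phase: "reach V E M \<Delta> Brid s \<Longrightarrow> \<not> (\<exists>x y Bx By. bridge_edge E M \<Delta> s x y Bx By)
              \<Longrightarrow> reach V E M (Suc \<Delta>) Grow s"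

end

theory Submission
  imports Defs
begin

text \<open>A vertex that becomes even in a bridge step lies in some node on the two tree paths.
  Every blossom on these paths, including their common top, which may be a node already
  absorbed into a blossom, only contains vertices that were even before; so the vertex was an
  odd vertex z on a path and receives lcp(x) + 1 + lcp(y) - lcp_odd(z) = 2\<Delta> - 1 - lcp_odd(z).
  Finally every lcp_odd value assigned up to phase \<Delta> is at most \<Delta> - 1.\<close>

text \<open>A parent that is no longer a node has been absorbed into a blossom, so its vertices are even.\<close>
definition parents_valid :: "'v sstate \<Rightarrow> bool" where
  "parents_valid s \<longleftrightarrow>
     (\<forall>n p. par s n = Some p \<longrightarrow> p \<in> nodes s \<or> nverts p \<subseteq> even_verts s)"

lemma even_verts_mono:
  assumes "nodes s \<subseteq> nodes s'" shows "even_verts s \<subseteq> even_verts s'"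
  using assms unfolding even_verts_def by blast

lemma even_verts_eq: "even_verts s = \<Union>(nverts ` {n \<in> nodes s. is_blossom n})"
  unfolding even_verts_def by blast

lemma even_verts_merge:
  assumes "nodes s' = nodes s - P \<union> {BlosN (\<Union>(nverts ` P)) b}"
  shows "even_verts s' = \<Union>(nverts ` {n \<in> nodes s - P. is_blossom n}) \<union> \<Union>(nverts ` P)"
proof -
  have "{n \<in> nodes s'. is_blossom n} = insert (BlosN (\<Union>(nverts ` P)) b) {n \<in> nodes s - P. is_blossom n}"
    unfolding assms by auto
  then show ?thesis
    unfolding even_verts_eq by (simp add: Un_commute)
qed

lemma growth_stepE:
  assumes "growth_step E M \<Delta> s v x s'"
  obtains Bv where "Bv \<in> nodes s"
    and "nodes s' = nodes s \<union> {OddN x, BlosN {mate M x} (mate M x)}"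
    and "par s' = (par s)(OddN x := Some Bv, BlosN {mate M x} (mate M x) := Some (OddN x))"
    and "lcpo s' = (lcpo s)(x := int \<Delta> - 1)"
  using assms unfolding growth_step_def Let_def by fastforce

lemma bridge_stepE:
  assumes "bridge_step E M \<Delta> s x y s'"
  obtains Bx By B P NB where "bridge_edge E M \<Delta> s x y Bx By"
    and "P = path_nodes s Bx B \<union> path_nodes s By B"
    and "NB = BlosN (\<Union>(nverts ` P)) (nbase B)"
    and "nodes s' = nodes s - P \<union> {NB}"
    and "par s' = (\<lambda>n. if n = NB then par s B
                       else (case par s n of None \<Rightarrow> None
                             | Some p \<Rightarrow> if p \<in> P then Some NB else Some p))"
    and "lcp s' = (\<lambda>z. if OddN z \<in> P then lcp s x + 1 + lcp s y - lcpo s z else lcp s z)"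
    and "lcpo s' = lcpo s"
proof -
  obtain Bx By B where "bridge_edge E M \<Delta> s x y Bx By"
    and "let P = path_nodes s Bx B \<union> path_nodes s By B;
             Z = {z. OddN z \<in> P};
             NB = BlosN (\<Union>(nverts ` P)) (nbase B) in
         s' = \<lparr> nodes = (nodes s - P) \<union> {NB},
                par = (\<lambda>n. if n = NB then par s B
                           else (case par s n of None \<Rightarrow> None
                                 | Some p \<Rightarrow> if p \<in> P then Some NB else Some p)),
                lcp = (\<lambda>z. if z \<in> Z then lcp s x + 1 + lcp s y - lcpo s z else lcp s z),
                lcpo = lcpo s \<rparr>"
    using assms unfolding bridge_step_def by blast
  then show thesis
    using that[OF _ refl refl] by (simp add: Let_def)
qed

lemma reach_lcpo_le:
  assumes "reach V E M \<Delta> st s"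
  shows "lcpo s z \<le> int \<Delta> - 1"
  using assms
proof (induction arbitrary: z rule: reach.induct)
  case init
  then show ?case by (simp add: init_state_def)
next
  case (grow \<Delta> s v x s')
  then show ?case by (elim growth_stepE) simp
next
  case (bridge \<Delta> s x y s')
  then show ?case by (elim bridge_stepE) simp
next
  case (next_phase \<Delta> s)
  show ?case using next_phase.IH[of z] by linarith
qed

lemma parents_valid_growth_step:
  assumes "parents_valid s" and "growth_step E M \<Delta> s v x s'"
  shows "parents_valid s'"
proof -
  obtain Bv where Bv: "Bv \<in> nodes s"
    and nodes': "nodes s' = nodes s \<union> {OddN x, BlosN {mate M x} (mate M x)}"
    and par': "par s' = (par s)(OddN x := Some Bv, BlosN {mate M x} (mate M x) := Some (OddN x))"
    using assms(2) by (elim growth_stepE)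
  have "even_verts s \<subseteq> even_verts s'" by (rule even_verts_mono) (simp add: nodes' subset_insertI2)
  then show ?thesis
    using assms(1) Bv unfolding parents_valid_def par' nodes' by auto
qed

lemma parents_valid_bridge_step:
  assumes "parents_valid s" and "bridge_step E M \<Delta> s x y s'"
  shows "parents_valid s'"
proof -
  obtain P NB B where NB: "NB = BlosN (\<Union>(nverts ` P)) (nbase B)"
    and nodes': "nodes s' = nodes s - P \<union> {NB}"
    and par': "par s' = (\<lambda>n. if n = NB then par s B
                       else (case par s n of None \<Rightarrow> None
                             | Some p \<Rightarrow> if p \<in> P then Some NB else Some p))"
    using assms(2) by (elim bridge_stepE)
  have even': "even_verts s' = \<Union>(nverts ` {n \<in> nodes s - P. is_blossom n}) \<union> \<Union>(nverts ` P)"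
    using nodes' unfolding NB by (rule even_verts_merge)
  moreover have "even_verts s \<subseteq> \<Union>(nverts ` {n \<in> nodes s - P. is_blossom n}) \<union> \<Union>(nverts ` P)"
    unfolding even_verts_eq by blast
  ultimately have "even_verts s \<subseteq> even_verts s'"
    by simp
  then have old_parent: "p \<in> nodes s' \<or> nverts p \<subseteq> even_verts s'"
    if "par s n = Some p" for n p
    using that assms(1) nodes' even' unfolding parents_valid_def by blast
  show ?thesis
    unfolding parents_valid_def
  proof (intro allI impI)
    fix n p assume "par s' n = Some p"
    then have "par s B = Some p \<or> p = NB \<or> par s n = Some p"
      unfolding par' by (auto split: if_splits option.splits)
    then show "p \<in> nodes s' \<or> nverts p \<subseteq> even_verts s'"
      using old_parent nodes' by blast
  qed
qed

lemma reach_parents_valid: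
  assumes "reach V E M \<Delta> st s"
  shows "parents_valid s"
  using assms
proof (induction rule: reach.induct)
  case init
  then show ?case by (simp add: parents_valid_def init_state_def)
qed (auto intro: parents_valid_growth_step parents_valid_bridge_step)

lemma path_node_not_in_nodes_even:
  assumes "parents_valid s" and "A \<in> nodes s"
    and "m \<in> path_nodes s A B" and "m \<notin> nodes s"
  shows "nverts m \<subseteq> even_verts s"
proof -
  have "(A, m) \<in> (prel s)\<^sup>*"
    using assms(3) unfolding path_nodes_def anc_def by blast
  then show ?thesis
  proof (cases rule: rtranclE)
    case base
    then show ?thesis using assms(2,4) by simp
  next
    case (step w)
    then have "par s w = Some m" by (simp add: prel_def)
    then show ?thesis using assms(1,4) unfolding parents_valid_def by blast
  qed
qed

lemma bridge_step_new_even_vertex_odd: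
  assumes "parents_valid s" and "bridge_step E M \<Delta> s x y s'"
    and "v \<notin> even_verts s" and "v \<in> even_verts s'"
  obtains Bx By B P where "bridge_edge E M \<Delta> s x y Bx By"
    and "P = path_nodes s Bx B \<union> path_nodes s By B" and "OddN v \<in> P"
    and "lcp s' v = lcp s x + 1 + lcp s y - lcpo s v"
proof -
  obtain Bx By B P NB where edge: "bridge_edge E M \<Delta> s x y Bx By"
    and P: "P = path_nodes s Bx B \<union> path_nodes s By B"
    and NB: "NB = BlosN (\<Union>(nverts ` P)) (nbase B)"
    and nodes': "nodes s' = nodes s - P \<union> {NB}"
    and lcp': "lcp s' = (\<lambda>z. if OddN z \<in> P then lcp s x + 1 + lcp s y - lcpo s z else lcp s z)"
    using assms(2) by (elim bridge_stepE)
  have "even_verts s' = \<Union>(nverts ` {n \<in> nodes s - P. is_blossom n}) \<union> \<Union>(nverts ` P)"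
    using nodes' unfolding NB by (rule even_verts_merge)
  then obtain m where m: "m \<in> P" "v \<in> nverts m"
    using assms(3,4) even_verts_eq[of s] by blast
  have "Bx \<in> nodes s" "By \<in> nodes s"
    using edge unfolding bridge_edge_def by auto
  then have "m \<notin> nodes s \<Longrightarrow> nverts m \<subseteq> even_verts s"
    using path_node_not_in_nodes_even[OF assms(1)] m(1) P by blast
  moreover have "m \<in> nodes s \<Longrightarrow> is_blossom m \<Longrightarrow> v \<in> even_verts s"
    using m(2) even_verts_eq[of s] by blast
  ultimately have "OddN v \<in> P"
    using m assms(3) by (cases m) auto
  then show thesis
    using that edge P lcp' by simp
qed

theorem lemma4:
  assumes "graph_matching V E M"
    and "reach V E M \<Delta> Brid s"
    and "bridge_step E M \<Delta> s x y s'"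
    and "v \<notin> even_verts s"
    and "v \<in> even_verts s'"
  shows "lcp s' v \<ge> int \<Delta>"
proof -
  obtain Bx By where edge: "bridge_edge E M \<Delta> s x y Bx By"
    and lcp_v: "lcp s' v = lcp s x + 1 + lcp s y - lcpo s v"
    using bridge_step_new_even_vertex_odd[OF reach_parents_valid[OF assms(2)] assms(3-5)] .
  have "lcp s x + lcp s y = 2 * int \<Delta> - 2"
    using edge unfolding bridge_edge_def by simp
  moreover have "lcpo s v \<le> int \<Delta> - 1"
    using reach_lcpo_le[OF assms(2)] .
  ultimately show ?thesis
    using lcp_v by linarith
qed

end
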